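(* Let $\pi$ be a probability density on a state space $\Omega$. Let $\{P(\cdot,\cdot;\zeta)\}$ be a family of Markov transition densities indexed by a stochastic sample $\zeta$, where $\zeta$ is drawn from a known fixed distribution, and fix $T\ge1$. Consider the chain that, from state $x$, sets $x_0=x$, and for $t=0,\dots,T-1$ samples $\zeta_t$ independently from that distribution and then $x_{t+1}\sim P(x_t,\cdot\,;\zeta_t)$; it sets $y=x_T$, computes $\tau=\min\left(1,\ \frac{\pi(y)}{\pi(x)}\prod_{t=0}^{T-1}\frac{P(x_{t+1},x_t;\zeta_t)}{P(x_t,x_{t+1};\zeta_t)}\right),$ and moves to $y$ with probability $\tau$, otherwise stays at $x$. Then this chain is reversible with respect to $\pi$, i.e. $\pi(x)G(x,y)=\pi(y)G(y,x)$ for its transition kernel $G$, and in particular has stationary distribution $\pi$. *)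

theory Defs
  imports "HOL-Probability.Probability"
begin

text \<open>State space: a measure space M (reference measure, densities are w.r.t. M).
  Noise space: a probability measure D (law of zeta).
  A path of the inner chain started at x is x_0 = x, x_1, ..., x_T, stored as
  the initial point x together with a function xs on {1..T}.\<close>

definition mc_path :: "'a \<Rightarrow> (nat \<Rightarrow> 'a) \<Rightarrow> nat \<Rightarrow> 'a" where
  "mc_path x xs t = (if t = 0 then x else xs t)"

definition path_weight ::
  "('a \<Rightarrow> 'a \<Rightarrow> 'z \<Rightarrow> real) \<Rightarrow> nat \<Rightarrow> 'a \<Rightarrow> (nat \<Rightarrow> 'a) \<Rightarrow> (nat \<Rightarrow> 'z) \<Rightarrow> real" where
  "path_weight P T x xs zs =
     (\<Prod>t<T. P (mc_path x xs t) (mc_path x xs (Suc t)) (zs t))"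

text \<open>Acceptance probability tau (with Isabelle's convention a / 0 = 0).\<close>
definition accept_prob ::
  "('a \<Rightarrow> real) \<Rightarrow> ('a \<Rightarrow> 'a \<Rightarrow> 'z \<Rightarrow> real) \<Rightarrow> nat \<Rightarrow> 'a \<Rightarrow> (nat \<Rightarrow> 'a) \<Rightarrow> (nat \<Rightarrow> 'z) \<Rightarrow> real" where
  "accept_prob \<pi> P T x xs zs =
     min 1 (\<pi> (xs T) / \<pi> x *
       (\<Prod>t<T. P (mc_path x xs (Suc t)) (mc_path x xs t) (zs t)
               / P (mc_path x xs t) (mc_path x xs (Suc t)) (zs t)))"

definition mh_kernel ::
  "'a measure \<Rightarrow> 'z measure \<Rightarrow> ('a \<Rightarrow> real) \<Rightarrow> ('a \<Rightarrow> 'a \<Rightarrow> 'z \<Rightarrow> real) \<Rightarrow> nat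
     \<Rightarrow> 'a \<Rightarrow> 'a set \<Rightarrow> ennreal" where
  "mh_kernel M D \<pi> P T x A =
     (\<integral>\<^sup>+ zs. (\<integral>\<^sup>+ xs.
         ennreal (path_weight P T x xs zs) *
         (ennreal (accept_prob \<pi> P T x xs zs) * indicator A (xs T)
          + ennreal (1 - accept_prob \<pi> P T x xs zs) * indicator A x)
       \<partial>(PiM {1..T} (\<lambda>_. M))) \<partial>(PiM {..<T} (\<lambda>_. D)))"

text \<open>Density G(x,y) (w.r.t. M) of the accepted-move part of the kernel, i.e. the
  transition density of G off the diagonal: x_T is fixed to y, the intermediate
  states x_1..x_{T-1} and the samples are integrated out.\<close>
definition mh_density ::
  "'a measure \<Rightarrow> 'z measure \<Rightarrow> ('a \<Rightarrow> real) \<Rightarrow> ('a \<Rightarrow> 'a \<Rightarrow> 'z \<Rightarrow> real) \<Rightarrow> nat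
     \<Rightarrow> 'a \<Rightarrow> 'a \<Rightarrow> ennreal" where
  "mh_density M D \<pi> P T x y =
     (\<integral>\<^sup>+ zs. (\<integral>\<^sup>+ xs.
         ennreal (path_weight P T x (xs(T := y)) zs * accept_prob \<pi> P T x (xs(T := y)) zs)
       \<partial>(PiM {1..<T} (\<lambda>_. M))) \<partial>(PiM {..<T} (\<lambda>_. D)))"

end

theory Submission
  imports Defs
begin

(* A proposal is a bridge x = x_0, x_1, ..., x_T = y together with the noises zeta_0, ...,
   zeta_{T-1}, and tau is the Metropolis-Hastings ratio between this bridge and its time reversal
   y = x_T, ..., x_0 driven by zeta_{T-1}, ..., zeta_0.  Hence pi(x) * (path weight) * tau is
   invariant under reversal, by the identity a c min(1, b d / (a c)) = b d min(1, a c / (b d)).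
   Reversing coordinates preserves the product reference measures on intermediate states and on
   noises, so integrating them out gives pi(x) G(x,y) = pi(y) G(y,x) for the density of accepted
   moves.  The remaining mass of G(x, .) is an atom at x, which contributes a term symmetric in
   A and B to the integral of pi(x) G(x, B) over A; so G is pi-reversible, and taking A to be the
   whole space, where G(x, .) has mass 1, gives stationarity. *)

lemma measurable_PiM_reindex:
  assumes "\<And>i. i \<in> I \<Longrightarrow> g i \<in> I"
  shows "(\<lambda>\<omega>. \<lambda>i\<in>I. \<omega> (g i)) \<in> measurable (PiM I (\<lambda>_. N)) (PiM I (\<lambda>_. N))"
  using assms by (intro measurable_restrict measurable_component_singleton) auto

lemma distr_PiM_permute:
  fixes N :: "'b measure" and I :: "'i set" and g :: "'i \<Rightarrow> 'i"
  assumes N: "sigma_finite_measure N" and I: "finite I" and g: "bij_betw g I I"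
  shows "distr (PiM I (\<lambda>_. N)) (PiM I (\<lambda>_. N)) (\<lambda>\<omega>. \<lambda>i\<in>I. \<omega> (g i)) = PiM I (\<lambda>_. N)"
proof -
  interpret product_sigma_finite "\<lambda>_. N" using N by (simp add: product_sigma_finite_def)
  define h where "h = the_inv_into I g"
  have h: "bij_betw h I I" "\<And>i. i \<in> I \<Longrightarrow> g (h i) = i" "\<And>i. i \<in> I \<Longrightarrow> h (g i) = i"
    using g by (auto simp: h_def bij_betw_the_inv_into f_the_inv_into_f_bij_betw
        the_inv_into_f_f bij_betw_imp_inj_on)
  have meas: "(\<lambda>\<omega>. \<lambda>i\<in>I. \<omega> (g i)) \<in> measurable (PiM I (\<lambda>_. N)) (PiM I (\<lambda>_. N))"
    using bij_betw_apply[OF g] by (rule measurable_PiM_reindex)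
  show ?thesis
  proof (rule PiM_eqI[OF I])
    fix A assume A: "\<And>i. i \<in> I \<Longrightarrow> A i \<in> sets N"
    have "(\<lambda>\<omega>. \<lambda>i\<in>I. \<omega> (g i)) -` Pi\<^sub>E I A \<inter> space (PiM I (\<lambda>_. N)) = Pi\<^sub>E I (\<lambda>i. A (h i))"
      using A[THEN sets.sets_into_space] bij_betwE[OF g] bij_betwE[OF h(1)] h(2,3)
      by (auto simp: space_PiM PiE_iff extensional_def) (metis subsetD)+
    then have "emeasure (distr (PiM I (\<lambda>_. N)) (PiM I (\<lambda>_. N)) (\<lambda>\<omega>. \<lambda>i\<in>I. \<omega> (g i))) (Pi\<^sub>E I A)
        = (\<Prod>i\<in>I. emeasure N (A (h i)))"
      using A bij_betwE[OF h(1)] by (simp add: emeasure_distr[OF meas] sets_PiM_I_finite I emeasure_PiM)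
    also have "\<dots> = (\<Prod>i\<in>I. emeasure N (A i))"
      using prod.reindex_bij_betw[OF h(1)] by simp
    finally show "emeasure (distr (PiM I (\<lambda>_. N)) (PiM I (\<lambda>_. N)) (\<lambda>\<omega>. \<lambda>i\<in>I. \<omega> (g i))) (Pi\<^sub>E I A)
        = (\<Prod>i\<in>I. emeasure N (A i))" .
  qed simp
qed

lemma nn_integral_PiM_permute:
  fixes N :: "'b measure" and I :: "'i set" and g :: "'i \<Rightarrow> 'i"
  assumes N: "sigma_finite_measure N" and I: "finite I" and g: "bij_betw g I I"
    and f: "f \<in> borel_measurable (PiM I (\<lambda>_. N))"
  shows "(\<integral>\<^sup>+\<omega>. f (\<lambda>i\<in>I. \<omega> (g i)) \<partial>PiM I (\<lambda>_. N)) = (\<integral>\<^sup>+\<omega>. f \<omega> \<partial>PiM I (\<lambda>_. N))"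
proof -
  have "(\<lambda>\<omega>. \<lambda>i\<in>I. \<omega> (g i)) \<in> measurable (PiM I (\<lambda>_. N)) (PiM I (\<lambda>_. N))"
    using bij_betw_apply[OF g] by (rule measurable_PiM_reindex)
  from nn_integral_distr[OF this] f show ?thesis
    by (simp add: distr_PiM_permute[OF N I g])
qed

lemma nn_integral_symmetric_kernel:
  fixes M :: "'a measure" and f :: "'a \<Rightarrow> 'a \<Rightarrow> ennreal"
  assumes M: "sigma_finite_measure M" and f: "(\<lambda>(x, y). f x y) \<in> borel_measurable (M \<Otimes>\<^sub>M M)"
    and sym: "\<And>x y. x \<in> space M \<Longrightarrow> y \<in> space M \<Longrightarrow> f x y = f y x"
    and A: "A \<in> sets M" and B: "B \<in> sets M"
  shows "(\<integral>\<^sup>+x\<in>A. (\<integral>\<^sup>+y\<in>B. f x y \<partial>M) \<partial>M) = (\<integral>\<^sup>+x\<in>B. (\<integral>\<^sup>+y\<in>A. f x y \<partial>M) \<partial>M)"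
proof -
  interpret pair_sigma_finite M M by (intro pair_sigma_finite.intro M)
  note [measurable] = f A B
  have "(\<integral>\<^sup>+x\<in>A. (\<integral>\<^sup>+y\<in>B. f x y \<partial>M) \<partial>M) = (\<integral>\<^sup>+x. \<integral>\<^sup>+y. f x y * indicator B y * indicator A x \<partial>M \<partial>M)"
    by (intro nn_integral_cong nn_integral_multc[symmetric]) measurable
  also have "\<dots> = (\<integral>\<^sup>+y. \<integral>\<^sup>+x. f x y * indicator B y * indicator A x \<partial>M \<partial>M)"
    by (rule Fubini'[symmetric]) measurable
  also have "\<dots> = (\<integral>\<^sup>+y. \<integral>\<^sup>+x. f y x * indicator A x * indicator B y \<partial>M \<partial>M)"
    by (intro nn_integral_cong) (simp add: sym mult_ac)
  also have "\<dots> = (\<integral>\<^sup>+x\<in>B. (\<integral>\<^sup>+y\<in>A. f x y \<partial>M) \<partial>M)"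
    by (intro nn_integral_cong nn_integral_multc) measurable
  finally show ?thesis .
qed

lemma min_ratio_balance:
  fixes a b c d :: real
  assumes "0 \<le> a" "0 \<le> b" "0 \<le> c" "0 \<le> d"
  shows "a * (c * min 1 (b / a * (d / c))) = b * (d * min 1 (a / b * (c / d)))"
proof (cases "a * c = 0 \<or> b * d = 0")
  case True
  then show ?thesis using assms by auto
next
  case False
  then have "a > 0" "b > 0" "c > 0" "d > 0" using assms by auto
  then show ?thesis
    by (auto simp: min_def field_simps mult.commute mult.left_commute)
qed

lemma PiM_component_in_space: "xs \<in> space (PiM I N) \<Longrightarrow> t \<in> I \<Longrightarrow> xs t \<in> space (N t)"
  by (auto simp: space_PiM)

lemma mc_path_in:
  assumes "x \<in> S" "\<And>t. t \<in> {1..n} \<Longrightarrow> xs t \<in> S" "t \<le> n"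
  shows "mc_path x xs t \<in> S"
  using assms by (cases "t = 0") (auto simp: mc_path_def)

lemma measurable_mc_path:
  assumes "fx \<in> measurable N M" "\<And>t. t \<in> {1..n} \<Longrightarrow> (\<lambda>\<omega>. fxs \<omega> t) \<in> measurable N M" "t \<le> n"
  shows "(\<lambda>\<omega>. mc_path (fx \<omega>) (fxs \<omega>) t) \<in> measurable N M"
  using assms by (cases "t = 0") (auto simp: mc_path_def)

lemma path_weight_Suc_upd:
  "path_weight P (Suc n) x (xs(Suc n := y)) zs = path_weight P n x xs zs * P (mc_path x xs n) y (zs n)"
proof -
  have "(\<Prod>t<n. P (mc_path x (xs(Suc n := y)) t) (mc_path x (xs(Suc n := y)) (Suc t)) (zs t))
      = path_weight P n x xs zs"
    unfolding path_weight_def by (rule prod.cong) (auto simp: mc_path_def)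
  then show ?thesis
    by (simp add: path_weight_def mc_path_def)
qed

lemma nn_integral_add_cmult:
  assumes "f \<in> borel_measurable N" "g \<in> borel_measurable N"
  shows "(\<integral>\<^sup>+x. f x + c * g x \<partial>N) = integral\<^sup>N N f + c * integral\<^sup>N N g"
  using assms by (simp add: nn_integral_add nn_integral_cmult)

lemma accept_prob_le_1: "accept_prob \<pi> P T x xs zs \<le> 1"
  by (simp add: accept_prob_def)

locale multistep_mh =
  M: sigma_finite_measure M + D: prob_space D
  for M :: "'a measure" and D :: "'z measure" +
  fixes \<pi> :: "'a \<Rightarrow> real" and P :: "'a \<Rightarrow> 'a \<Rightarrow> 'z \<Rightarrow> real" and T :: nat
  assumes pi_meas[measurable]: "\<pi> \<in> borel_measurable M"
    and pi_nonneg: "\<And>x. x \<in> space M \<Longrightarrow> 0 \<le> \<pi> x"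
    and P_meas: "(\<lambda>(x, y, z). P x y z) \<in> borel_measurable (M \<Otimes>\<^sub>M M \<Otimes>\<^sub>M D)"
    and P_nonneg: "\<And>x y z. x \<in> space M \<Longrightarrow> y \<in> space M \<Longrightarrow> z \<in> space D \<Longrightarrow> 0 \<le> P x y z"
    and P_prob: "\<And>x z. x \<in> space M \<Longrightarrow> z \<in> space D \<Longrightarrow> (\<integral>\<^sup>+ y. ennreal (P x y z) \<partial>M) = 1"
    and T_pos: "1 \<le> T"
begin

abbreviation "mid_states \<equiv> PiM {1..<T} (\<lambda>_. M)"
abbreviation "path_states \<equiv> PiM {1..T} (\<lambda>_. M)"
abbreviation "noises \<equiv> PiM {..<T} (\<lambda>_. D)"

abbreviation "bridge_weight x y xs zs \<equiv> path_weight P T x (xs(T := y)) zs"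
abbreviation "bridge_accept x y xs zs \<equiv> accept_prob \<pi> P T x (xs(T := y)) zs"

sublocale Prod: product_sigma_finite "\<lambda>_. M"
  by (intro product_sigma_finite.intro M.sigma_finite_measure_axioms)

sublocale Mid: sigma_finite_measure mid_states
  by (rule Prod.sigma_finite) simp

sublocale Path: sigma_finite_measure path_states
  by (rule Prod.sigma_finite) simp

sublocale Noise: prob_space noises
  by (intro prob_space_PiM D.prob_space_axioms)

lemma measurable_P[measurable (raw)]:
  assumes "a \<in> measurable N M" "b \<in> measurable N M" "c \<in> measurable N D"
  shows "(\<lambda>\<omega>. P (a \<omega>) (b \<omega>) (c \<omega>)) \<in> borel_measurable N"
proof -
  have "(\<lambda>\<omega>. (a \<omega>, b \<omega>, c \<omega>)) \<in> measurable N (M \<Otimes>\<^sub>M M \<Otimes>\<^sub>M D)"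
    using assms by simp
  from measurable_compose[OF this P_meas] show ?thesis by simp
qed

lemma measurable_path_weight:
  assumes "\<And>t. t \<le> n \<Longrightarrow> (\<lambda>\<omega>. mc_path (fx \<omega>) (fxs \<omega>) t) \<in> measurable N M"
    and "\<And>t. t < n \<Longrightarrow> (\<lambda>\<omega>. fzs \<omega> t) \<in> measurable N D"
  shows "(\<lambda>\<omega>. path_weight P n (fx \<omega>) (fxs \<omega>) (fzs \<omega>)) \<in> borel_measurable N"
  unfolding path_weight_def using assms by (intro borel_measurable_prod measurable_P) auto

lemma measurable_accept_prob:
  assumes path: "\<And>t. t \<le> T \<Longrightarrow> (\<lambda>\<omega>. mc_path (fx \<omega>) (fxs \<omega>) t) \<in> measurable N M"
    and noise: "\<And>t. t < T \<Longrightarrow> (\<lambda>\<omega>. fzs \<omega> t) \<in> measurable N D"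
  shows "(\<lambda>\<omega>. accept_prob \<pi> P T (fx \<omega>) (fxs \<omega>) (fzs \<omega>)) \<in> borel_measurable N"
proof -
  have [measurable]: "fx \<in> measurable N M" "(\<lambda>\<omega>. fxs \<omega> T) \<in> measurable N M"
    using path[of 0] path[of T] T_pos by (simp_all add: mc_path_def)
  have [measurable]: "(\<lambda>\<omega>. \<Prod>t<T. P (mc_path (fx \<omega>) (fxs \<omega>) (Suc t)) (mc_path (fx \<omega>) (fxs \<omega>) t) (fzs \<omega> t)
      / P (mc_path (fx \<omega>) (fxs \<omega>) t) (mc_path (fx \<omega>) (fxs \<omega>) (Suc t)) (fzs \<omega> t)) \<in> borel_measurable N"
    using path noise by (intro borel_measurable_prod borel_measurable_divide measurable_P) auto
  show ?thesis
    unfolding accept_prob_def by measurable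
qed

lemma measurable_path_weight_states[measurable (raw)]:
  assumes "fx \<in> measurable N M" "fxs \<in> measurable N path_states" "fzs \<in> measurable N noises"
  shows "(\<lambda>\<omega>. path_weight P T (fx \<omega>) (fxs \<omega>) (fzs \<omega>)) \<in> borel_measurable N"
  using assms by (intro measurable_path_weight measurable_mc_path) auto

lemma measurable_accept_prob_states[measurable (raw)]:
  assumes "fx \<in> measurable N M" "fxs \<in> measurable N path_states" "fzs \<in> measurable N noises"
  shows "(\<lambda>\<omega>. accept_prob \<pi> P T (fx \<omega>) (fxs \<omega>) (fzs \<omega>)) \<in> borel_measurable N"
  using assms by (intro measurable_accept_prob measurable_mc_path) auto

lemma measurable_bridge[measurable (raw)]:
  assumes "fxs \<in> measurable N mid_states" "fy \<in> measurable N M"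
  shows "(\<lambda>\<omega>. (fxs \<omega>)(T := fy \<omega>)) \<in> measurable N path_states"
  using assms T_pos by (intro measurable_fun_upd[where J="{1..<T}"]) auto

lemma measurable_last_state[measurable]: "(\<lambda>xs. xs T) \<in> measurable path_states M"
  using T_pos by (intro measurable_component_singleton) simp

lemma bridge_in_path_states:
  "xs \<in> space mid_states \<Longrightarrow> y \<in> space M \<Longrightarrow> xs(T := y) \<in> space path_states"
  using T_pos by (auto simp: space_PiM PiE_iff extensional_def)

lemma path_weight_nonneg:
  assumes "x \<in> space M" "xs \<in> space (PiM {1..n} (\<lambda>_. M))" "\<And>t. t < n \<Longrightarrow> zs t \<in> space D"
  shows "0 \<le> path_weight P n x xs zs"
  unfolding path_weight_def using assms
  by (intro prod_nonneg P_nonneg mc_path_in[where n=n]) (auto simp: space_PiM)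

lemma accept_prob_nonneg:
  assumes "x \<in> space M" "xs \<in> space path_states" "zs \<in> space noises"
  shows "0 \<le> accept_prob \<pi> P T x xs zs"
  unfolding accept_prob_def using assms T_pos
  by (auto simp: space_PiM intro!: mult_nonneg_nonneg divide_nonneg_nonneg prod_nonneg P_nonneg
      pi_nonneg mc_path_in[where n=T])

(* The reversed bridge from y to x visits x_{T-1}, ..., x_1 and uses zeta_{T-1}, ..., zeta_0. *)
definition rev_states :: "(nat \<Rightarrow> 'a) \<Rightarrow> nat \<Rightarrow> 'a" where
  "rev_states xs = (\<lambda>t\<in>{1..<T}. xs (T - t))"

definition rev_noises :: "(nat \<Rightarrow> 'z) \<Rightarrow> nat \<Rightarrow> 'z" where
  "rev_noises zs = (\<lambda>t\<in>{..<T}. zs (T - Suc t))"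

lemma rev_noises_in_space:
  assumes "zs \<in> space noises"
  shows "rev_noises zs \<in> space noises"
  unfolding rev_noises_def space_PiM restrict_PiE_iff using PiM_component_in_space[OF assms] by auto

lemma mc_path_rev_states:
  "t \<le> T \<Longrightarrow> mc_path y ((rev_states xs)(T := x)) t = mc_path x (xs(T := y)) (T - t)"
  using T_pos by (auto simp: mc_path_def rev_states_def)

lemma bridge_reversal_balance:
  assumes x: "x \<in> space M" and y: "y \<in> space M"
    and xs: "xs \<in> space mid_states" and zs: "zs \<in> space noises"
  shows "\<pi> x * (bridge_weight x y xs zs * bridge_accept x y xs zs)
    = \<pi> y * (bridge_weight y x (rev_states xs) (rev_noises zs)
        * bridge_accept y x (rev_states xs) (rev_noises zs))"
proof -
  define p where "p t = mc_path x (xs(T := y)) t" for t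
  define Wf where "Wf = (\<Prod>t<T. P (p t) (p (Suc t)) (zs t))"
  define Wb where "Wb = (\<Prod>t<T. P (p (Suc t)) (p t) (zs t))"
  have rev_p: "mc_path y ((rev_states xs)(T := x)) t = p (T - t)" if "t \<le> T" for t
    using mc_path_rev_states[OF that] by (simp add: p_def)
  have "bridge_weight y x (rev_states xs) (rev_noises zs)
      = (\<Prod>t<T. P (p (Suc (T - Suc t))) (p (T - Suc t)) (zs (T - Suc t)))"
    unfolding path_weight_def by (rule prod.cong) (auto simp: rev_p rev_noises_def Suc_diff_Suc)
  also have "\<dots> = Wb"
    unfolding Wb_def by (rule prod.nat_diff_reindex[where g="\<lambda>t. P (p (Suc t)) (p t) (zs t)"])
  finally have weight_rev: "bridge_weight y x (rev_states xs) (rev_noises zs) = Wb" .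
  have "(\<Prod>t<T. P (mc_path y ((rev_states xs)(T := x)) (Suc t)) (mc_path y ((rev_states xs)(T := x)) t) (rev_noises zs t)
        / P (mc_path y ((rev_states xs)(T := x)) t) (mc_path y ((rev_states xs)(T := x)) (Suc t)) (rev_noises zs t))
      = (\<Prod>t<T. P (p (T - Suc t)) (p (Suc (T - Suc t))) (zs (T - Suc t))
        / P (p (Suc (T - Suc t))) (p (T - Suc t)) (zs (T - Suc t)))"
    by (rule prod.cong) (auto simp: rev_p rev_noises_def Suc_diff_Suc)
  also have "\<dots> = (\<Prod>t<T. P (p t) (p (Suc t)) (zs t) / P (p (Suc t)) (p t) (zs t))"
    by (rule prod.nat_diff_reindex[where g="\<lambda>t. P (p t) (p (Suc t)) (zs t) / P (p (Suc t)) (p t) (zs t)"])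
  finally have accept_rev: "bridge_accept y x (rev_states xs) (rev_noises zs) = min 1 (\<pi> x / \<pi> y * (Wf / Wb))"
    unfolding accept_prob_def Wf_def Wb_def prod_dividef using T_pos by simp
  have weight: "bridge_weight x y xs zs = Wf"
    unfolding path_weight_def Wf_def p_def ..
  have accept: "bridge_accept x y xs zs = min 1 (\<pi> y / \<pi> x * (Wb / Wf))"
    unfolding accept_prob_def Wb_def Wf_def p_def prod_dividef by simp
  have p_in: "p t \<in> space M" if "t \<le> T" for t
    unfolding p_def by (rule mc_path_in[OF x PiM_component_in_space[OF bridge_in_path_states[OF xs y]] that])
  have "0 \<le> Wf" "0 \<le> Wb"
    unfolding Wf_def Wb_def using p_in PiM_component_in_space[OF zs] by (auto intro!: prod_nonneg P_nonneg)
  then show ?thesis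
    unfolding weight accept weight_rev accept_rev using pi_nonneg x y by (intro min_ratio_balance) auto
qed

lemma pi_mult_mh_density:
  assumes x[measurable]: "x \<in> space M" and y[measurable]: "y \<in> space M"
  shows "ennreal (\<pi> x) * mh_density M D \<pi> P T x y
    = (\<integral>\<^sup>+zs. \<integral>\<^sup>+xs. ennreal (\<pi> x * (bridge_weight x y xs zs * bridge_accept x y xs zs)) \<partial>mid_states \<partial>noises)"
proof -
  have "ennreal (\<pi> x) * mh_density M D \<pi> P T x y
    = (\<integral>\<^sup>+zs. ennreal (\<pi> x) * (\<integral>\<^sup>+xs. ennreal (bridge_weight x y xs zs * bridge_accept x y xs zs) \<partial>mid_states) \<partial>noises)"
    unfolding mh_density_def by (rule nn_integral_cmult[symmetric]) measurable
  also have "\<dots> = (\<integral>\<^sup>+zs. \<integral>\<^sup>+xs. ennreal (\<pi> x * (bridge_weight x y xs zs * bridge_accept x y xs zs)) \<partial>mid_states \<partial>noises)"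
  proof (intro nn_integral_cong)
    fix zs assume [measurable]: "zs \<in> space noises"
    have "(\<lambda>xs. ennreal (bridge_weight x y xs zs * bridge_accept x y xs zs)) \<in> borel_measurable mid_states"
      by measurable
    then show "ennreal (\<pi> x) * (\<integral>\<^sup>+xs. ennreal (bridge_weight x y xs zs * bridge_accept x y xs zs) \<partial>mid_states)
      = (\<integral>\<^sup>+xs. ennreal (\<pi> x * (bridge_weight x y xs zs * bridge_accept x y xs zs)) \<partial>mid_states)"
      using pi_nonneg[OF x] by (simp add: nn_integral_cmult[symmetric] ennreal_mult')
  qed
  finally show ?thesis .
qed

lemma mh_density_balance:
  assumes x[measurable]: "x \<in> space M" and y[measurable]: "y \<in> space M"
  shows "ennreal (\<pi> x) * mh_density M D \<pi> P T x y = ennreal (\<pi> y) * mh_density M D \<pi> P T y x"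
proof -
  define g where "g xs zs = ennreal (\<pi> y * (bridge_weight y x xs zs * bridge_accept y x xs zs))" for xs zs
  have [measurable]: "(\<lambda>(zs, xs). g xs zs) \<in> borel_measurable (noises \<Otimes>\<^sub>M mid_states)"
    unfolding g_def by measurable
  have rev_states_bij: "bij_betw (\<lambda>t. T - t) {1..<T} {1..<T}"
    by (rule bij_betw_byWitness[where f'="\<lambda>t. T - t"]) auto
  have rev_noises_bij: "bij_betw (\<lambda>t. T - Suc t) {..<T} {..<T}"
    by (rule bij_betw_byWitness[where f'="\<lambda>t. T - Suc t"]) auto
  have "ennreal (\<pi> x) * mh_density M D \<pi> P T x y
      = (\<integral>\<^sup>+zs. \<integral>\<^sup>+xs. g (rev_states xs) (rev_noises zs) \<partial>mid_states \<partial>noises)"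
    unfolding pi_mult_mh_density[OF x y] g_def
    by (intro nn_integral_cong) (simp add: bridge_reversal_balance x y)
  also have "\<dots> = (\<integral>\<^sup>+zs. \<integral>\<^sup>+xs. g xs (rev_noises zs) \<partial>mid_states \<partial>noises)"
  proof (rule nn_integral_cong)
    fix zs assume "zs \<in> space noises"
    note [measurable] = rev_noises_in_space[OF this]
    show "(\<integral>\<^sup>+xs. g (rev_states xs) (rev_noises zs) \<partial>mid_states) = (\<integral>\<^sup>+xs. g xs (rev_noises zs) \<partial>mid_states)"
      unfolding rev_states_def
      by (rule nn_integral_PiM_permute[OF M.sigma_finite_measure_axioms _ rev_states_bij]) measurable
  qed
  also have "\<dots> = (\<integral>\<^sup>+zs. \<integral>\<^sup>+xs. g xs zs \<partial>mid_states \<partial>noises)"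
    unfolding rev_noises_def
    by (rule nn_integral_PiM_permute[OF D.sigma_finite_measure_axioms _ rev_noises_bij]) measurable
  also have "\<dots> = ennreal (\<pi> y) * mh_density M D \<pi> P T y x"
    unfolding pi_mult_mh_density[OF y x] g_def ..
  finally show ?thesis .
qed

definition reject_mass :: "'a \<Rightarrow> ennreal" where
  "reject_mass x = (\<integral>\<^sup>+zs. \<integral>\<^sup>+xs.
     ennreal (path_weight P T x xs zs * (1 - accept_prob \<pi> P T x xs zs)) \<partial>path_states \<partial>noises)"

lemma accepted_mass_eq_mh_density:
  assumes x[measurable]: "x \<in> space M" and B[measurable]: "B \<in> sets M"
  shows "(\<integral>\<^sup>+zs. \<integral>\<^sup>+xs. ennreal (path_weight P T x xs zs * accept_prob \<pi> P T x xs zs) * indicator B (xs T)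
      \<partial>path_states \<partial>noises)
    = (\<integral>\<^sup>+y\<in>B. mh_density M D \<pi> P T x y \<partial>M)"
proof -
  interpret M_Mid: pair_sigma_finite M mid_states ..
  interpret M_Noise: pair_sigma_finite M noises ..
  have split_last: "{1..T} = insert T {1..<T}"
    using T_pos by auto
  have "(\<integral>\<^sup>+zs. \<integral>\<^sup>+xs. ennreal (path_weight P T x xs zs * accept_prob \<pi> P T x xs zs) * indicator B (xs T)
      \<partial>path_states \<partial>noises)
    = (\<integral>\<^sup>+zs. \<integral>\<^sup>+xs. \<integral>\<^sup>+y. ennreal (bridge_weight x y xs zs * bridge_accept x y xs zs) * indicator B y
      \<partial>M \<partial>mid_states \<partial>noises)"
  proof (intro nn_integral_cong)
    fix zs assume [measurable]: "zs \<in> space noises"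
    have "(\<lambda>xs. ennreal (path_weight P T x xs zs * accept_prob \<pi> P T x xs zs) * indicator B (xs T))
        \<in> borel_measurable path_states"
      by measurable
    then show "(\<integral>\<^sup>+xs. ennreal (path_weight P T x xs zs * accept_prob \<pi> P T x xs zs) * indicator B (xs T)
        \<partial>path_states)
      = (\<integral>\<^sup>+xs. \<integral>\<^sup>+y. ennreal (bridge_weight x y xs zs * bridge_accept x y xs zs) * indicator B y
        \<partial>M \<partial>mid_states)"
      unfolding split_last using T_pos by (subst Prod.product_nn_integral_insert) auto
  qed
  also have "\<dots> = (\<integral>\<^sup>+zs. \<integral>\<^sup>+y. \<integral>\<^sup>+xs. ennreal (bridge_weight x y xs zs * bridge_accept x y xs zs) * indicator B y
      \<partial>mid_states \<partial>M \<partial>noises)"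
    by (intro nn_integral_cong M_Mid.Fubini') measurable
  also have "\<dots> = (\<integral>\<^sup>+y. \<integral>\<^sup>+zs. \<integral>\<^sup>+xs. ennreal (bridge_weight x y xs zs * bridge_accept x y xs zs) * indicator B y
      \<partial>mid_states \<partial>noises \<partial>M)"
    by (rule M_Noise.Fubini') measurable
  also have "\<dots> = (\<integral>\<^sup>+y\<in>B. mh_density M D \<pi> P T x y \<partial>M)"
  proof (intro nn_integral_cong)
    fix y assume [measurable]: "y \<in> space M"
    have "(\<integral>\<^sup>+zs. \<integral>\<^sup>+xs. ennreal (bridge_weight x y xs zs * bridge_accept x y xs zs) * indicator B y
        \<partial>mid_states \<partial>noises)
      = (\<integral>\<^sup>+zs. (\<integral>\<^sup>+xs. ennreal (bridge_weight x y xs zs * bridge_accept x y xs zs) \<partial>mid_states)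
        * indicator B y \<partial>noises)"
      by (intro nn_integral_cong nn_integral_multc) measurable
    also have "\<dots> = mh_density M D \<pi> P T x y * indicator B y"
      unfolding mh_density_def by (rule nn_integral_multc) measurable
    finally show "(\<integral>\<^sup>+zs. \<integral>\<^sup>+xs. ennreal (bridge_weight x y xs zs * bridge_accept x y xs zs) * indicator B y
        \<partial>mid_states \<partial>noises)
      = mh_density M D \<pi> P T x y * indicator B y" .
  qed
  finally show ?thesis .
qed

lemma mh_kernel_split:
  assumes x[measurable]: "x \<in> space M" and B[measurable]: "B \<in> sets M"
  shows "mh_kernel M D \<pi> P T x B = (\<integral>\<^sup>+y\<in>B. mh_density M D \<pi> P T x y \<partial>M) + indicator B x * reject_mass x"
proof -
  have "mh_kernel M D \<pi> P T x B
    = (\<integral>\<^sup>+zs. \<integral>\<^sup>+xs. ennreal (path_weight P T x xs zs * accept_prob \<pi> P T x xs zs) * indicator B (xs T)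
        + indicator B x * ennreal (path_weight P T x xs zs * (1 - accept_prob \<pi> P T x xs zs))
      \<partial>path_states \<partial>noises)"
    unfolding mh_kernel_def
  proof (intro nn_integral_cong)
    fix zs xs assume zs: "zs \<in> space noises" and xs: "xs \<in> space path_states"
    have "0 \<le> path_weight P T x xs zs"
      using PiM_component_in_space[OF zs] by (intro path_weight_nonneg[OF x xs]) auto
    moreover have "0 \<le> accept_prob \<pi> P T x xs zs"
      by (rule accept_prob_nonneg[OF x xs zs])
    ultimately show "ennreal (path_weight P T x xs zs) *
        (ennreal (accept_prob \<pi> P T x xs zs) * indicator B (xs T)
          + ennreal (1 - accept_prob \<pi> P T x xs zs) * indicator B x)
      = ennreal (path_weight P T x xs zs * accept_prob \<pi> P T x xs zs) * indicator B (xs T)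
        + indicator B x * ennreal (path_weight P T x xs zs * (1 - accept_prob \<pi> P T x xs zs))"
      by (simp add: ennreal_mult' distrib_left mult_ac)
  qed
  also have "\<dots> = (\<integral>\<^sup>+zs. \<integral>\<^sup>+xs. ennreal (path_weight P T x xs zs * accept_prob \<pi> P T x xs zs) * indicator B (xs T)
      \<partial>path_states \<partial>noises) + indicator B x * reject_mass x"
    unfolding reject_mass_def
    by (subst nn_integral_add_cmult[symmetric], measurable, intro nn_integral_cong nn_integral_add_cmult) measurable
  finally show ?thesis
    unfolding accepted_mass_eq_mh_density[OF x B] .
qed

lemma measurable_mh_density[measurable]: "(\<lambda>(x, y). mh_density M D \<pi> P T x y) \<in> borel_measurable (M \<Otimes>\<^sub>M M)"
  unfolding mh_density_def by measurable

lemma measurable_reject_mass[measurable]: "reject_mass \<in> borel_measurable M"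
  unfolding reject_mass_def by measurable

lemma pi_mh_kernel_split:
  assumes A[measurable]: "A \<in> sets M" and B[measurable]: "B \<in> sets M"
  shows "(\<integral>\<^sup>+x\<in>A. ennreal (\<pi> x) * mh_kernel M D \<pi> P T x B \<partial>M)
    = (\<integral>\<^sup>+x\<in>A. (\<integral>\<^sup>+y\<in>B. ennreal (\<pi> x) * mh_density M D \<pi> P T x y \<partial>M) \<partial>M)
      + (\<integral>\<^sup>+x. ennreal (\<pi> x) * reject_mass x * indicator A x * indicator B x \<partial>M)"
proof -
  have "(\<integral>\<^sup>+x\<in>A. ennreal (\<pi> x) * mh_kernel M D \<pi> P T x B \<partial>M)
    = (\<integral>\<^sup>+x. (\<integral>\<^sup>+y\<in>B. ennreal (\<pi> x) * mh_density M D \<pi> P T x y \<partial>M) * indicator A x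
        + ennreal (\<pi> x) * reject_mass x * indicator A x * indicator B x \<partial>M)"
  proof (intro nn_integral_cong)
    fix x assume x[measurable]: "x \<in> space M"
    have "(\<integral>\<^sup>+y\<in>B. ennreal (\<pi> x) * mh_density M D \<pi> P T x y \<partial>M)
      = ennreal (\<pi> x) * (\<integral>\<^sup>+y\<in>B. mh_density M D \<pi> P T x y \<partial>M)"
      by (subst nn_integral_cmult[symmetric]) (measurable, simp add: mult_ac)
    then show "ennreal (\<pi> x) * mh_kernel M D \<pi> P T x B * indicator A x
      = (\<integral>\<^sup>+y\<in>B. ennreal (\<pi> x) * mh_density M D \<pi> P T x y \<partial>M) * indicator A x
        + ennreal (\<pi> x) * reject_mass x * indicator A x * indicator B x"
      by (simp add: mh_kernel_split[OF x B] distrib_left distrib_right mult_ac)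
  qed
  also have "\<dots> = (\<integral>\<^sup>+x\<in>A. (\<integral>\<^sup>+y\<in>B. ennreal (\<pi> x) * mh_density M D \<pi> P T x y \<partial>M) \<partial>M)
      + (\<integral>\<^sup>+x. ennreal (\<pi> x) * reject_mass x * indicator A x * indicator B x \<partial>M)"
    by (rule nn_integral_add) measurable
  finally show ?thesis .
qed

lemma mh_kernel_reversible:
  assumes A[measurable]: "A \<in> sets M" and B[measurable]: "B \<in> sets M"
  shows "(\<integral>\<^sup>+x\<in>A. ennreal (\<pi> x) * mh_kernel M D \<pi> P T x B \<partial>M)
    = (\<integral>\<^sup>+y\<in>B. ennreal (\<pi> y) * mh_kernel M D \<pi> P T y A \<partial>M)"
proof -
  have "(\<integral>\<^sup>+x\<in>A. (\<integral>\<^sup>+y\<in>B. ennreal (\<pi> x) * mh_density M D \<pi> P T x y \<partial>M) \<partial>M)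
    = (\<integral>\<^sup>+x\<in>B. (\<integral>\<^sup>+y\<in>A. ennreal (\<pi> x) * mh_density M D \<pi> P T x y \<partial>M) \<partial>M)"
    by (rule nn_integral_symmetric_kernel[OF M.sigma_finite_measure_axioms _ mh_density_balance A B]) measurable
  then show ?thesis
    unfolding pi_mh_kernel_split[OF A B] pi_mh_kernel_split[OF B A] by (simp add: mult_ac)
qed

lemma nn_integral_path_weight:
  assumes x: "x \<in> space M" and zs: "\<And>t. t < n \<Longrightarrow> zs t \<in> space D"
  shows "(\<integral>\<^sup>+xs. ennreal (path_weight P n x xs zs) \<partial>PiM {1..n} (\<lambda>_. M)) = 1"
  using zs
proof (induction n)
  case 0
  then show ?case
    by (simp add: Prod.nn_integral_empty path_weight_def PiM_empty)
next
  case (Suc n)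
  have split_last: "{1..Suc n} = insert (Suc n) {1..n}"
    by auto
  have "(\<lambda>xs. ennreal (path_weight P (Suc n) x xs zs)) \<in> borel_measurable (PiM {1..Suc n} (\<lambda>_. M))"
    using Suc.prems x by (intro measurable_compose[OF _ measurable_ennreal] measurable_path_weight measurable_mc_path) auto
  then have "(\<integral>\<^sup>+xs. ennreal (path_weight P (Suc n) x xs zs) \<partial>PiM {1..Suc n} (\<lambda>_. M))
    = (\<integral>\<^sup>+xs. \<integral>\<^sup>+y. ennreal (path_weight P (Suc n) x (xs(Suc n := y)) zs) \<partial>M \<partial>PiM {1..n} (\<lambda>_. M))"
    unfolding split_last by (subst Prod.product_nn_integral_insert) auto
  also have "\<dots> = (\<integral>\<^sup>+xs. ennreal (path_weight P n x xs zs) \<partial>PiM {1..n} (\<lambda>_. M))"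
  proof (rule nn_integral_cong)
    fix xs assume xs: "xs \<in> space (PiM {1..n} (\<lambda>_. M))"
    have weight_nonneg: "0 \<le> path_weight P n x xs zs"
      using Suc.prems by (intro path_weight_nonneg[OF x xs]) auto
    have last_in: "mc_path x xs n \<in> space M"
      using x PiM_component_in_space[OF xs] by (rule mc_path_in) auto
    have [measurable]: "(\<lambda>y. ennreal (P (mc_path x xs n) y (zs n))) \<in> borel_measurable M"
      using last_in Suc.prems by measurable
    have "(\<integral>\<^sup>+y. ennreal (path_weight P (Suc n) x (xs(Suc n := y)) zs) \<partial>M)
      = (\<integral>\<^sup>+y. ennreal (path_weight P n x xs zs) * ennreal (P (mc_path x xs n) y (zs n)) \<partial>M)"
      using weight_nonneg by (simp add: path_weight_Suc_upd ennreal_mult')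
    also have "\<dots> = ennreal (path_weight P n x xs zs) * (\<integral>\<^sup>+y. ennreal (P (mc_path x xs n) y (zs n)) \<partial>M)"
      by (rule nn_integral_cmult) measurable
    also have "\<dots> = ennreal (path_weight P n x xs zs)"
      using last_in Suc.prems by (simp add: P_prob)
    finally show "(\<integral>\<^sup>+y. ennreal (path_weight P (Suc n) x (xs(Suc n := y)) zs) \<partial>M)
      = ennreal (path_weight P n x xs zs)" .
  qed
  also have "\<dots> = 1"
    using Suc by simp
  finally show ?case .
qed

lemma mh_kernel_space:
  assumes x: "x \<in> space M"
  shows "mh_kernel M D \<pi> P T x (space M) = 1"
proof -
  have "mh_kernel M D \<pi> P T x (space M)
    = (\<integral>\<^sup>+zs. \<integral>\<^sup>+xs. ennreal (path_weight P T x xs zs) \<partial>path_states \<partial>noises)"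
    unfolding mh_kernel_def
  proof (intro nn_integral_cong)
    fix zs xs assume zs: "zs \<in> space noises" and xs: "xs \<in> space path_states"
    have "ennreal (accept_prob \<pi> P T x xs zs) + ennreal (1 - accept_prob \<pi> P T x xs zs) = 1"
      using accept_prob_nonneg[OF x xs zs] accept_prob_le_1 by (subst ennreal_plus[symmetric]) auto
    moreover have "xs T \<in> space M"
      using PiM_component_in_space[OF xs] T_pos by auto
    ultimately show "ennreal (path_weight P T x xs zs) *
        (ennreal (accept_prob \<pi> P T x xs zs) * indicator (space M) (xs T)
          + ennreal (1 - accept_prob \<pi> P T x xs zs) * indicator (space M) x)
      = ennreal (path_weight P T x xs zs)"
      using x by simp
  qed
  also have "\<dots> = (\<integral>\<^sup>+zs. 1 \<partial>noises)"
    using PiM_component_in_space by (intro nn_integral_cong nn_integral_path_weight x) fastforce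
  also have "\<dots> = 1"
    by (simp add: Noise.emeasure_space_1)
  finally show ?thesis .
qed

lemma mh_kernel_stationary:
  assumes B: "B \<in> sets M"
  shows "(\<integral>\<^sup>+x. ennreal (\<pi> x) * mh_kernel M D \<pi> P T x B \<partial>M) = (\<integral>\<^sup>+x\<in>B. ennreal (\<pi> x) \<partial>M)"
proof -
  have "(\<integral>\<^sup>+x. ennreal (\<pi> x) * mh_kernel M D \<pi> P T x B \<partial>M)
      = (\<integral>\<^sup>+x\<in>space M. ennreal (\<pi> x) * mh_kernel M D \<pi> P T x B \<partial>M)"
    by (rule nn_integral_cong) simp
  also have "\<dots> = (\<integral>\<^sup>+x\<in>B. ennreal (\<pi> x) * mh_kernel M D \<pi> P T x (space M) \<partial>M)"
    by (rule mh_kernel_reversible[OF sets.top B])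
  also have "\<dots> = (\<integral>\<^sup>+x\<in>B. ennreal (\<pi> x) \<partial>M)"
    by (rule nn_integral_cong) (simp add: mh_kernel_space)
  finally show ?thesis .
qed

end

theorem mainTheorem3:
  fixes M :: "'a measure" and D :: "'z measure"
    and \<pi> :: "'a \<Rightarrow> real" and P :: "'a \<Rightarrow> 'a \<Rightarrow> 'z \<Rightarrow> real" and T :: nat
  assumes M: "sigma_finite_measure M"
    and D: "prob_space D"
    and pi_meas: "\<pi> \<in> borel_measurable M"
    and pi_nonneg: "\<And>x. x \<in> space M \<Longrightarrow> 0 \<le> \<pi> x"
    and pi_prob: "(\<integral>\<^sup>+ x. ennreal (\<pi> x) \<partial>M) = 1"
    and P_meas: "(\<lambda>(x, y, z). P x y z) \<in> borel_measurable (M \<Otimes>\<^sub>M M \<Otimes>\<^sub>M D)"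
    and P_nonneg: "\<And>x y z. x \<in> space M \<Longrightarrow> y \<in> space M \<Longrightarrow> z \<in> space D \<Longrightarrow> 0 \<le> P x y z"
    and P_prob: "\<And>x z. x \<in> space M \<Longrightarrow> z \<in> space D \<Longrightarrow> (\<integral>\<^sup>+ y. ennreal (P x y z) \<partial>M) = 1"
    and T: "1 \<le> T"
  shows "(\<forall>x\<in>space M. \<forall>y\<in>space M.
            ennreal (\<pi> x) * mh_density M D \<pi> P T x y = ennreal (\<pi> y) * mh_density M D \<pi> P T y x)
       \<and> (\<forall>A\<in>sets M. \<forall>B\<in>sets M.
            (\<integral>\<^sup>+ x\<in>A. ennreal (\<pi> x) * mh_kernel M D \<pi> P T x B \<partial>M)
          = (\<integral>\<^sup>+ y\<in>B. ennreal (\<pi> y) * mh_kernel M D \<pi> P T y A \<partial>M))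
       \<and> (\<forall>B\<in>sets M.
            (\<integral>\<^sup>+ x. ennreal (\<pi> x) * mh_kernel M D \<pi> P T x B \<partial>M)
          = (\<integral>\<^sup>+ x\<in>B. ennreal (\<pi> x) \<partial>M))"
proof -
  interpret multistep_mh M D \<pi> P T
    using M D pi_meas pi_nonneg P_meas P_nonneg P_prob T
    by (simp add: multistep_mh_def multistep_mh_axioms_def)
  show ?thesis
    by (intro conjI ballI mh_density_balance mh_kernel_reversible mh_kernel_stationary)
qed

end
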